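(* In the Yangian $Y_\hbar(A(m,n))$ described below, for all $i,j\in I$ and $s\in\mathbb Z_{\ge0}$ one has, as an identity of formal power series in $v$, $$\Big[\hbar\sum_{r\ge0}t_{i,r}\frac{v^r}{r!},\;x^\pm_{j,s}\Big]=\pm\frac{q^{a_{ij}v}-q^{-a_{ij}v}}{v}\sum_{k\ge0}\frac{v^k}{k!}\,x^\pm_{j,s+k},$$ where $q^{cv}:=e^{\hbar cv/2}$.
   Context: Let $m,n\ge0$, $I=\{1,\dots,m+n+1\}$, $(a_{ij})$ the symmetric matrix with $a_{ii}=2$ ($i\le m$), $a_{m+1,m+1}=0$, $a_{ii}=-2$ ($i\ge m+2$), $a_{i,i+1}=a_{i+1,i}=-1$ ($i\le m$), $a_{i,i+1}=a_{i+1,i}=1$ ($m+1\le i\le m+n$), other entries $0$; $\tilde a_{ij}=-1$ if $|i-j|=1$, $0$ otherwise. Brackets are supercommutators $[a,b]=ab-(-1)^{p(a)p(b)}ba$. $Y_\hbar(A(m,n))$ is the superalgebra over $\mathbb C[[\hbar]]$ generated by $h_{i,k},x^\pm_{i,k}$ ($i\in I$, $k\ge0$), with $x^\pm_{m+1,k}$ odd and others even, subject to: $[h_{i,k},h_{j,l}]=0$; $[h_{i,0},x^\pm_{j,s}]=\pm a_{ij}x^\pm_{j,s}$; $[x^+_{i,k},x^-_{j,l}]=\delta_{ij}h_{i,k+l}$; for $(i,j)\ne(m+1,m+1)$: $[h_{i,k+1},x^\pm_{j,l}]=[h_{i,k},x^\pm_{j,l+1}]\pm\frac{a_{ij}\hbar}{2}(h_{i,k}x^\pm_{j,l}+x^\pm_{j,l}h_{i,k})$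 and $[x^\pm_{i,k+1},x^\pm_{j,l}]=[x^\pm_{i,k},x^\pm_{j,l+1}]\pm\frac{a_{ij}\hbar}{2}(x^\pm_{i,k}x^\pm_{j,l}+x^\pm_{j,l}x^\pm_{i,k})$; $[h_{m+1,k+1},x^\pm_{m+1,l}]=0$; $[x^\pm_{m+1,k+1},x^\pm_{m+1,l}]=0$; for $i\ne j$, $r=1-\tilde a_{ij}$: $\sum_{\pi\in\mathfrak S_r}[x^\pm_{i,t_{\pi(1)}},[\dots,[x^\pm_{i,t_{\pi(r)}},x^\pm_{j,s}]\dots]]=0$; $[[x^\pm_{m,k},x^\pm_{m+1,0}],[x^\pm_{m+1,0},x^\pm_{m+2,t}]]=0$. The elements $t_{i,r}$ are defined by $\hbar\sum_{r\ge0}t_{i,r}u^{-r-1}=\log\big(1+\hbar\sum_{r\ge0}h_{i,r}u^{-r-1}\big)$. *)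

theory Defs
  imports "HOL-Computational_Algebra.Formal_Power_Series" "HOL-Combinatorics.Permutations"
begin

(* An associative unital algebra over C[[hbar]]: a ring 'a together with a unital ring
   homomorphism emb from C[[hbar]] (= complex fps, hbar = fps_X) into the centre of 'a. *)
definition alg_structure :: "(complex fps \<Rightarrow> 'a::ring_1) \<Rightarrow> bool" where
  "alg_structure emb \<longleftrightarrow> emb 1 = 1 \<and> (\<forall>a b. emb (a + b) = emb a + emb b)
     \<and> (\<forall>a b. emb (a * b) = emb a * emb b) \<and> (\<forall>c y. emb c * y = y * emb c)"

(* supercommutator of homogeneous elements with parities p q (True = odd) *)
definition sbr :: "bool \<Rightarrow> bool \<Rightarrow> 'a::ring_1 \<Rightarrow> 'a \<Rightarrow> 'a" where
  "sbr p q a b = (if p \<and> q then a * b + b * a else a * b - b * a)"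

(* the Cartan matrix a_ij of A(m,n) on I = {1..m+n+1} *)
definition cartan :: "nat \<Rightarrow> nat \<Rightarrow> nat \<Rightarrow> nat \<Rightarrow> int" where
  "cartan m n i j = (if i = j then (if i \<le> m then 2 else if i = m + 1 then 0 else -2)
     else if j = i + 1 \<or> i = j + 1 then (if min i j \<le> m then -1 else 1) else 0)"

definition cartan_tilde :: "nat \<Rightarrow> nat \<Rightarrow> int" where
  "cartan_tilde i j = (if j = i + 1 \<or> i = j + 1 then -1 else 0)"

definition ypar :: "nat \<Rightarrow> nat \<Rightarrow> bool" where
  "ypar m i = (i = m + 1)"

definition sg :: "bool \<Rightarrow> int" where
  "sg e = (if e then 1 else -1)"

(* nested bracket [x_{i,t1},[x_{i,t2},...,[x_{i,tr},x_{j,s}]...]] with correct parities *)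
fun serre_nest :: "nat \<Rightarrow> (bool \<Rightarrow> nat \<Rightarrow> nat \<Rightarrow> 'a::ring_1) \<Rightarrow> bool \<Rightarrow> nat \<Rightarrow> nat \<Rightarrow> nat
    \<Rightarrow> nat list \<Rightarrow> 'a" where
  "serre_nest m x e i j s [] = x e j s"
| "serre_nest m x e i j s (t # ts) =
     sbr (ypar m i) (ypar m j \<noteq> (ypar m i \<and> odd (length ts))) (x e i t) (serre_nest m x e i j s ts)"

(* defining relations of Y_hbar(A(m,n)); x True = x^+, x False = x^- *)
definition yangian_rels :: "nat \<Rightarrow> nat \<Rightarrow> (complex fps \<Rightarrow> 'a::ring_1) \<Rightarrow> (nat \<Rightarrow> nat \<Rightarrow> 'a)
    \<Rightarrow> (bool \<Rightarrow> nat \<Rightarrow> nat \<Rightarrow> 'a) \<Rightarrow> bool" where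
  "yangian_rels m n emb h x \<longleftrightarrow>
    (let I = {1..m+n+1}; p = ypar m; a = cartan m n; hb = emb fps_X;
         half = (\<lambda>c::int. emb (fps_const (of_int c / 2))) in
     (\<forall>i\<in>I. \<forall>j\<in>I. \<forall>k l. h i k * h j l = h j l * h i k) \<and>
     (\<forall>i\<in>I. \<forall>j\<in>I. \<forall>e s. sbr False (p j) (h i 0) (x e j s) = of_int (sg e * a i j) * x e j s) \<and>
     (\<forall>i\<in>I. \<forall>j\<in>I. \<forall>k l. sbr (p i) (p j) (x True i k) (x False j l) = (if i = j then h i (k + l) else 0)) \<and>
     (\<forall>i\<in>I. \<forall>j\<in>I. (i, j) \<noteq> (m+1, m+1) \<longrightarrow> (\<forall>e k l.
        sbr False (p j) (h i (k+1)) (x e j l) = sbr False (p j) (h i k) (x e j (l+1))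
          + of_int (sg e) * half (a i j) * hb * (h i k * x e j l + x e j l * h i k) \<and>
        sbr (p i) (p j) (x e i (k+1)) (x e j l) = sbr (p i) (p j) (x e i k) (x e j (l+1))
          + of_int (sg e) * half (a i j) * hb * (x e i k * x e j l + x e j l * x e i k))) \<and>
     (\<forall>e k l. sbr False True (h (m+1) (k+1)) (x e (m+1) l) = 0 \<and>
              sbr True True (x e (m+1) (k+1)) (x e (m+1) l) = 0) \<and>
     (\<forall>i\<in>I. \<forall>j\<in>I. i \<noteq> j \<longrightarrow> (\<forall>e s (t::nat \<Rightarrow> nat).
        (let r = nat (1 - cartan_tilde i j) in
         (\<Sum>\<pi> | \<pi> permutes {1..r}. serre_nest m x e i j s (map (\<lambda>q. t (\<pi> q)) [1..<r+1])) = 0))) \<and>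
     (1 \<le> m \<and> 1 \<le> n \<longrightarrow> (\<forall>e k t.
        sbr True True (sbr False True (x e m k) (x e (m+1) 0)) (sbr True False (x e (m+1) 0) (x e (m+2) t)) = 0)))"

(* coefficient of u^{-k} in (\<Sum>_r h_r u^{-r-1})^n *)
fun hpow :: "(nat \<Rightarrow> 'a::ring_1) \<Rightarrow> nat \<Rightarrow> nat \<Rightarrow> 'a" where
  "hpow hh 0 k = (if k = 0 then 1 else 0)"
| "hpow hh (Suc n) k = (\<Sum>a<k. hh a * hpow hh n (k - Suc a))"

(* t_{i,r}: hbar t_r is the coefficient of u^{-r-1} in log(1 + hbar \<Sum>_r h_r u^{-r-1})
   = \<Sum>_{n\<ge>1} (-1)^(n+1)/n hbar^n (\<Sum>_r h_r u^{-r-1})^n *)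
definition tgen :: "(complex fps \<Rightarrow> 'a::ring_1) \<Rightarrow> (nat \<Rightarrow> 'a) \<Rightarrow> nat \<Rightarrow> 'a" where
  "tgen emb hh r = (\<Sum>n\<in>{1..r+1}. emb (fps_const ((-1) ^ (n+1) / of_nat n)) * emb fps_X ^ (n - 1) * hpow hh n (r+1))"

(* coefficient of v^N in q^{c v} = exp(hbar c v / 2), an element of C[[hbar]] *)
definition qcoef :: "int \<Rightarrow> nat \<Rightarrow> complex fps" where
  "qcoef c N = fps_const ((of_int c / 2) ^ N / fact N) * fps_X ^ N"

end

(*
  Put H(z) = 1 + hbar * sum_r h_r z^(r+1) (so z = u^-1) and encode x_(s+k) as T^k x_s, where T is
  the shift; write x(P) for P(T) x_s. The defining relations between h_i and x_j say exactly that
  H(z) x(P) = x(Phi(z) P) H(z) with Phi(z) = (1 - beta z) / (1 - alpha z), alpha = T + c hbar,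
  beta = T - c hbar and c = +-a_ij / 2. The h_r commute, so L = log H satisfies L' H = H', and
  differentiating the conjugation formula gives [L'(z), x(P)] = x((log Phi)'(z) P)
  = x(sum_n (alpha^(n+1) - beta^(n+1)) z^n P). The coefficient of z^p in L' is (p+1) hbar t_p, so
  [hbar t_p / p!, x_s] = x((alpha^(p+1) - beta^(p+1)) / (p+1)!), and the binomial theorem turns
  this into the q-exponential formula.
*)

theory Submission
  imports Defs "HOL-Computational_Algebra.Polynomial"
begin

unbundle fps_syntax

section \<open>Power series over a noncommutative ring\<close>

lemma fps_mult_commute_coeffwise:
  fixes f g :: "'a::ring_1 fps"
  assumes "\<And>a b. f $ a * g $ b = g $ b * f $ a"
  shows "f * g = g * f"
proof (rule fps_ext)
  fix n
  have "(f * g) $ n = (\<Sum>i=0..n. g $ (n - i) * f $ i)"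
    by (simp add: fps_mult_nth assms)
  also have "\<dots> = (\<Sum>i=0..n. g $ (n - (n + 0 - i)) * f $ (n + 0 - i))"
    by (rule sum.atLeastAtMost_rev)
  also have "\<dots> = (g * f) $ n"
    by (simp add: fps_mult_nth)
  finally show "(f * g) $ n = (g * f) $ n" .
qed

lemma fps_deriv_power_commuting:
  fixes G :: "'a::ring_1 fps"
  assumes "G * fps_deriv G = fps_deriv G * G"
  shows "fps_deriv (G ^ Suc n) = of_nat (Suc n) * G ^ n * fps_deriv G"
proof (induction n)
  case (Suc n)
  have "fps_deriv (G ^ Suc (Suc n)) = G * fps_deriv (G ^ Suc n) + fps_deriv G * G ^ Suc n"
    by (simp only: power_Suc[of G "Suc n"] fps_deriv_mult)
  also have "fps_deriv G * G ^ Suc n = G ^ Suc n * fps_deriv G"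
    by (rule power_commuting_commutes[OF assms, symmetric])
  also have "G * fps_deriv (G ^ Suc n) = of_nat (Suc n) * G ^ Suc n * fps_deriv G"
    by (metis Suc.IH mult.assoc mult_of_nat_commute power_Suc)
  finally show ?case
    by (simp add: algebra_simps)
qed simp

lemma fps_power_nth_below:
  fixes G :: "'a::ring_1 fps"
  assumes "G $ 0 = 0" and "k < n"
  shows "(G ^ n) $ k = 0"
proof (cases "G = 0")
  case False
  then have "subdegree G \<ge> 1"
    using assms(1) subdegree_eq_0_iff by (metis less_one not_less)
  then have "k < n * subdegree G"
    using assms(2) by (metis mult.right_neutral mult_le_mono2 order_less_le_trans)
  then show ?thesis
    by (rule fps_pow_nth_below_subdegree)
qed (use assms(2) in \<open>simp add: zero_power\<close>)

lemma fps_mult_eq_0_cancel_right: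
  fixes F H :: "'a::ring_1 fps"
  assumes "F * H = 0" and "H $ 0 = 1"
  shows "F = 0"
proof -
  have "F $ n = 0" for n
  proof (induction n rule: less_induct)
    case (less n)
    have "0 = (F * H) $ n"
      using assms(1) by simp
    also have "\<dots> = (\<Sum>i=0..<n. F $ i * H $ (n - i)) + F $ n * H $ 0"
      by (simp add: fps_mult_nth flip: atLeastLessThanSuc_atLeastAtMost)
    also have "\<dots> = F $ n"
      using less assms(2) by simp
    finally show ?case by simp
  qed
  then show ?thesis
    by (simp add: fps_eq_iff)
qed

lemma sum_powers_mult_one_minus:
  fixes x :: "'a::ring_1"
  shows "(\<Sum>i<n. x ^ i) * (1 - x) = 1 - x ^ n"
proof (induction n)
  case (Suc n)
  have "(\<Sum>i<Suc n. x ^ i) * (1 - x) = (\<Sum>i<n. x ^ i) * (1 - x) + x ^ n * (1 - x)"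
    by (simp add: distrib_right)
  also have "\<dots> = 1 - x ^ Suc n"
    by (simp only: Suc.IH) (simp add: algebra_simps power_commutes)
  finally show ?case .
qed simp

lemma fps_const_neg_one_power: "fps_const ((-1::'a::ring_1) ^ n) = (-1) ^ n"
  by (simp only: fps_const_1_eq_1 flip: fps_const_power fps_const_neg)

text \<open>Coefficients of \<open>(1 - b z) / (1 - a z)\<close>.\<close>

definition ratio_coeff :: "'a::comm_ring_1 \<Rightarrow> 'a \<Rightarrow> nat \<Rightarrow> 'a" where
  "ratio_coeff a b k = (if k = 0 then 1 else (a - b) * a ^ (k - 1))"

lemma ratio_coeff_0 [simp]: "ratio_coeff a b 0 = 1"
  by (simp add: ratio_coeff_def)

lemma ratio_coeff_Suc: "ratio_coeff a b (Suc k) = ratio_coeff a b k * a - (if k = 0 then b else 0)"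
  by (cases k) (simp_all add: ratio_coeff_def algebra_simps)

text \<open>The logarithmic derivative of \<open>(1 - b z) / (1 - a z)\<close> is \<open>\<Sum>\<^sub>n (a\<^sup>n\<^sup>+\<^sup>1 - b\<^sup>n\<^sup>+\<^sup>1) z\<^sup>n\<close>.\<close>

lemma ratio_coeff_log_deriv:
  "(\<Sum>i\<le>n. (a ^ Suc i - b ^ Suc i) * ratio_coeff a b (n - i)) = of_nat (Suc n) * ratio_coeff a b (Suc n)"
proof (induction n)
  case (Suc n)
  have "(\<Sum>i\<le>n. (a ^ Suc i - b ^ Suc i) * ratio_coeff a b (Suc n - i))
      = (\<Sum>i\<le>n. a * ((a ^ Suc i - b ^ Suc i) * ratio_coeff a b (n - i))
                   - (if i = n then (a ^ Suc n - b ^ Suc n) * b else 0))"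
    by (intro sum.cong refl) (auto simp: Suc_diff_le ratio_coeff_Suc algebra_simps)
  also have "\<dots> = a * (of_nat (Suc n) * ratio_coeff a b (Suc n)) - (a ^ Suc n - b ^ Suc n) * b"
    by (simp only: sum_subtractf Suc.IH flip: sum_distrib_left) simp
  finally show ?case
    by (simp add: ratio_coeff_def algebra_simps)
qed (simp add: ratio_coeff_def)

lemma degree_linear_power_diff_le:
  fixes a b :: "'a::comm_ring_1"
  shows "degree ([:a, 1:] ^ Suc n - [:b, 1:] ^ Suc n) \<le> n"
proof (rule degree_le, intro allI impI)
  fix i assume "n < i"
  then consider "i = Suc n" | "Suc n < i"
    by linarith
  then show "coeff ([:a, 1:] ^ Suc n - [:b, 1:] ^ Suc n) i = 0"
    by cases (simp_all add: coeff_linear_poly_power coeff_eq_0 degree_linear_power)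
qed

lemma fps_const_mult_X_power:
  fixes u :: "'a::comm_ring_1"
  shows "(fps_const u * fps_X) ^ M = fps_const (u ^ M) * fps_X ^ M"
  by (simp add: power_mult_distrib)

text \<open>For \<open>d = \<sigma> a \<hbar> / 2\<close>, the coefficient of \<open>T\<^sup>k\<close> in \<open>((T + d)\<^sup>p\<^sup>+\<^sup>1 - (T - d)\<^sup>p\<^sup>+\<^sup>1) / (p + 1)!\<close> is the
  coefficient of \<open>v\<^sup>p\<close> in \<open>\<sigma> (q\<^sup>a\<^sup>v - q\<^sup>-\<^sup>a\<^sup>v) / v \<cdot> v\<^sup>k / k!\<close>; for \<open>\<sigma> = -1\<close> this uses that
  \<open>u\<^sup>M - (-u)\<^sup>M\<close> is odd in \<open>u\<close>.\<close>

lemma coeff_linear_power_diff_qcoef: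
  fixes \<sigma> a :: int
  assumes \<sigma>: "\<sigma> = 1 \<or> \<sigma> = -1" and "k \<le> p"
  defines "d \<equiv> fps_const (of_int \<sigma> * of_int a / 2) * fps_X"
  shows "coeff (smult (fps_const (1 / fact (Suc p))) ([:d, 1:] ^ Suc p - [:- d, 1:] ^ Suc p)) k
    = of_int \<sigma> * (qcoef a (p - k + 1) - qcoef (- a) (p - k + 1)) * fps_const (1 / fact k)"
proof -
  define M where "M = p - k + 1"
  define v :: complex where "v = of_int a / 2"
  have M: "Suc p - k = M"
    using assms(2) by (simp add: M_def)
  have odd_diff: "(of_int \<sigma> * v) ^ M - (- (of_int \<sigma> * v)) ^ M = of_int \<sigma> * (v ^ M - (- v) ^ M)"
    using \<sigma> by auto
  have binomial: "1 / fact (Suc p) * of_nat (Suc p choose k) = 1 / (fact k * fact M :: complex)"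
    using assms(2) by (simp add: binomial_fact M flip: fact_Suc)
  have d: "d = fps_const (of_int \<sigma> * v) * fps_X" and minus_d: "- d = fps_const (- (of_int \<sigma> * v)) * fps_X"
    by (simp_all add: d_def v_def flip: fps_const_neg)
  have d_pow: "d ^ M - (- d) ^ M = fps_const ((of_int \<sigma> * v) ^ M - (- (of_int \<sigma> * v)) ^ M) * fps_X ^ M"
    unfolding minus_d unfolding d by (simp only: fps_const_mult_X_power fps_const_sub flip: left_diff_distrib)
  have "coeff (smult (fps_const (1 / fact (Suc p))) ([:d, 1:] ^ Suc p - [:- d, 1:] ^ Suc p)) k
      = fps_const (1 / fact (Suc p)) * (of_nat (Suc p choose k) * (d ^ M - (- d) ^ M))"
    using assms(2) by (simp only: coeff_smult coeff_diff coeff_linear_poly_power[OF le_SucI] M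
        power_one mult_1_right right_diff_distrib)
  also have "\<dots> = fps_const (1 / fact (Suc p) * of_nat (Suc p choose k))
      * fps_const ((of_int \<sigma> * v) ^ M - (- (of_int \<sigma> * v)) ^ M) * fps_X ^ M"
    by (simp only: d_pow mult.assoc fps_const_mult[symmetric] fps_of_nat)
  also have "\<dots> = fps_const (of_int \<sigma> * ((v ^ M - (- v) ^ M) / fact M) * (1 / fact k)) * fps_X ^ M"
  proof -
    have "1 / (fact k * fact M) * (of_int \<sigma> * (v ^ M - (- v) ^ M))
        = of_int \<sigma> * ((v ^ M - (- v) ^ M) / fact M) * (1 / fact k :: complex)"
      by (simp add: field_simps)
    then show ?thesis
      by (simp only: binomial odd_diff fps_const_mult)
  qed
  also have "\<dots> = of_int \<sigma> * (qcoef a M - qcoef (- a) M) * fps_const (1 / fact k)"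
  proof -
    have "qcoef a M - qcoef (- a) M = fps_const ((v ^ M - (- v) ^ M) / fact M) * fps_X ^ M"
      unfolding qcoef_def v_def by (simp add: diff_divide_distrib flip: left_diff_distrib)
    then show ?thesis
      by (simp only: fps_of_int[symmetric])
        (metis (no_types, lifting) fps_const_mult mult.assoc mult.commute)
  qed
  finally show ?thesis
    by (simp only: M_def)
qed

section \<open>Algebras over \<open>\<complex>[[\<hbar>]]\<close> and the logarithm\<close>

locale fps_algebra =
  fixes emb :: "complex fps \<Rightarrow> 'a::ring_1"
  assumes alg_structure: "alg_structure emb"
begin

lemma emb_1 [simp]: "emb 1 = 1"
  and emb_add: "emb (a + b) = emb a + emb b"
  and emb_mult: "emb (a * b) = emb a * emb b"
  and emb_commute: "emb a * y = y * emb a"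
  using alg_structure unfolding alg_structure_def by blast+

lemma emb_left_commute: "y * (emb a * z) = emb a * (y * z)"
  by (metis emb_commute mult.assoc)

lemma emb_0 [simp]: "emb 0 = 0"
  using emb_add[of 0 0] by simp

lemma emb_uminus: "emb (- a) = - emb a"
  using add.inverse_unique[of "emb a" "emb (- a)"] emb_add[of a "- a"] by simp

lemma emb_power: "emb (a ^ k) = emb a ^ k"
  by (induction k) (simp_all add: emb_mult)

lemma emb_power_left_commute: "y * (emb a ^ n * z) = emb a ^ n * (y * z)"
  by (metis emb_left_commute emb_power)

lemma emb_of_nat: "emb (of_nat k) = of_nat k"
  by (induction k) (simp_all add: emb_add)

lemma emb_of_int: "emb (of_int k) = of_int k"
  by (cases k rule: int_cases2) (simp_all add: emb_of_nat emb_uminus)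

definition log_coeff :: "nat \<Rightarrow> 'a" where
  "log_coeff n = emb (fps_const ((-1) ^ (n + 1) / of_nat n))"

definition fps_log_trunc :: "nat \<Rightarrow> 'a fps \<Rightarrow> 'a fps" where
  "fps_log_trunc N G = (\<Sum>n=1..N. fps_const (log_coeff n) * G ^ n)"

text \<open>The series \<open>log (1 + G)\<close> for \<open>G $ 0 = 0\<close>: only the powers \<open>G ^ n\<close> with \<open>n \<le> k\<close>
  contribute to its \<open>k\<close>-th coefficient.\<close>

definition fps_log :: "'a fps \<Rightarrow> 'a fps" where
  "fps_log G = Abs_fps (\<lambda>k. fps_log_trunc k G $ k)"

lemma log_coeff_mult_of_nat: "log_coeff (Suc m) * of_nat (Suc m) = (-1) ^ m"
proof -
  have "fps_const ((-1) ^ (Suc m + 1) / of_nat (Suc m)) * of_nat (Suc m)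
      = fps_const ((-1) ^ (Suc m + 1) / of_nat (Suc m) * of_nat (Suc m) :: complex)"
    by (simp only: fps_const_mult flip: fps_of_nat)
  also have "\<dots> = (-1) ^ m"
    using of_nat_neq_0[of m, where 'a=complex] by (simp add: fps_const_neg_one_power)
  finally show ?thesis
    unfolding log_coeff_def by (metis emb_mult emb_of_nat emb_power emb_uminus emb_1)
qed

lemma fps_log_trunc_nth:
  assumes "G $ 0 = 0" and "k \<le> N"
  shows "fps_log_trunc N G $ k = fps_log G $ k"
proof -
  have "fps_log_trunc N G $ k = (\<Sum>n=1..k. log_coeff n * (G ^ n) $ k)"
    unfolding fps_log_trunc_def fps_sum_nth fps_mult_left_const_nth
    using assms by (intro sum.mono_neutral_right) (auto simp: fps_power_nth_below)
  then show ?thesis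
    by (simp add: fps_log_def fps_log_trunc_def fps_sum_nth)
qed

lemma fps_deriv_log_trunc:
  fixes G :: "'a fps"
  assumes comm: "G * fps_deriv G = fps_deriv G * G"
  shows "fps_deriv (fps_log_trunc N G) * (1 + G) = (1 - (- G) ^ N) * fps_deriv G"
proof -
  have deriv_term: "fps_deriv (fps_const (log_coeff (Suc m)) * G ^ Suc m) = (- G) ^ m * fps_deriv G" for m
  proof -
    have coeff: "fps_const (log_coeff (Suc m)) * of_nat (Suc m) = ((-1) ^ m :: 'a fps)"
      by (simp only: fps_const_mult log_coeff_mult_of_nat fps_const_neg_one_power flip: fps_of_nat)
    have "fps_deriv (fps_const (log_coeff (Suc m)) * G ^ Suc m)
        = fps_const (log_coeff (Suc m)) * (of_nat (Suc m) * G ^ m * fps_deriv G)"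
      by (simp only: fps_deriv_mult_const_left fps_deriv_power_commuting[OF comm])
    also have "\<dots> = (fps_const (log_coeff (Suc m)) * of_nat (Suc m)) * G ^ m * fps_deriv G"
      by (simp only: mult.assoc)
    finally show ?thesis
      by (simp only: coeff power_minus[of G])
  qed
  have "fps_deriv (fps_log_trunc N G) = (\<Sum>m<N. (- G) ^ m * fps_deriv G)"
    unfolding fps_log_trunc_def fps_deriv_sum deriv_term[symmetric]
    by (rule sum.reindex_bij_witness[where i=Suc and j="\<lambda>n. n - 1"]) auto
  also have "\<dots> = (\<Sum>m<N. (- G) ^ m) * fps_deriv G"
    by (simp only: sum_distrib_right)
  finally have "fps_deriv (fps_log_trunc N G) * (1 + G) = (\<Sum>m<N. (- G) ^ m) * (fps_deriv G * (1 - (- G)))"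
    by (simp only: mult.assoc diff_minus_eq_add)
  also have "fps_deriv G * (1 - (- G)) = (1 - (- G)) * fps_deriv G"
    using comm by (simp add: algebra_simps)
  finally show ?thesis
    by (simp only: sum_powers_mult_one_minus flip: mult.assoc)
qed

lemma fps_deriv_log:
  fixes G :: "'a fps"
  assumes G0: "G $ 0 = 0" and comm: "G * fps_deriv G = fps_deriv G * G"
  shows "fps_deriv (fps_log G) * (1 + G) = fps_deriv G"
proof (rule fps_ext)
  fix n
  define N where "N = Suc (Suc n)"
  have "(fps_deriv (fps_log G) * (1 + G)) $ n = (fps_deriv (fps_log_trunc N G) * (1 + G)) $ n"
    unfolding fps_mult_nth using G0 by (intro sum.cong refl) (simp add: fps_log_trunc_nth N_def)
  also have "\<dots> = fps_deriv G $ n - ((- G) ^ N * fps_deriv G) $ n"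
    by (simp only: fps_deriv_log_trunc[OF comm] left_diff_distrib mult_1_left fps_sub_nth)
  also have "((- G) ^ N * fps_deriv G) $ n = 0"
  proof -
    have "((- G) ^ N) $ i = 0" if "i \<le> n" for i
      using G0 that by (intro fps_power_nth_below) (simp_all add: N_def)
    then show ?thesis
      unfolding fps_mult_nth by (intro sum.neutral) simp
  qed
  finally show "(fps_deriv (fps_log G) * (1 + G)) $ n = fps_deriv G $ n"
    by simp
qed

text \<open>The series \<open>\<hbar> \<Sum>\<^sub>r h\<^sub>r u\<^sup>-\<^sup>r\<^sup>-\<^sup>1\<close>, written in the variable \<open>z = u\<^sup>-\<^sup>1\<close>.\<close>

definition hbar_series :: "(nat \<Rightarrow> 'a) \<Rightarrow> 'a fps" where
  "hbar_series h = Abs_fps (\<lambda>k. if k = 0 then 0 else emb fps_X * h (k - 1))"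

lemma hbar_series_nth_0 [simp]: "hbar_series h $ 0 = 0"
  and hbar_series_nth_Suc [simp]: "hbar_series h $ Suc k = emb fps_X * h k"
  by (simp_all add: hbar_series_def)

lemma hbar_series_power_nth: "(hbar_series h ^ n) $ k = emb fps_X ^ n * hpow h n k"
proof (induction n arbitrary: k)
  case (Suc n)
  show ?case
  proof (cases k)
    case (Suc k')
    have "(hbar_series h ^ Suc n) $ k = (\<Sum>i=0..Suc k'. hbar_series h $ i * (hbar_series h ^ n) $ (Suc k' - i))"
      by (simp only: \<open>k = Suc k'\<close> power_Suc fps_mult_nth)
    also have "\<dots> = (\<Sum>i=0..k'. emb fps_X * h i * (emb fps_X ^ n * hpow h n (k' - i)))"
      by (simp only: sum.atLeast0_atMost_Suc_shift) (simp add: Suc.IH)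
    also have "\<dots> = (\<Sum>i<k. emb fps_X ^ Suc n * (h i * hpow h n (k - Suc i)))"
      unfolding Suc lessThan_Suc_atMost atLeast0AtMost
      by (intro sum.cong refl) (simp only: mult.assoc emb_power_left_commute[of "h _"] power_Suc diff_Suc_Suc)
    finally show ?thesis
      by (simp add: sum_distrib_left)
  qed (simp add: fps_mult_nth)
qed simp

lemma hbar_tgen_eq_fps_log_nth: "emb fps_X * tgen emb h r = fps_log (hbar_series h) $ Suc r"
proof -
  have "fps_log (hbar_series h) $ Suc r = (\<Sum>n=1..Suc r. log_coeff n * (emb fps_X ^ n * hpow h n (Suc r)))"
    by (simp add: fps_log_def fps_log_trunc_def fps_sum_nth hbar_series_power_nth)
  also have "\<dots> = emb fps_X * tgen emb h r"
    unfolding tgen_def sum_distrib_left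
  proof (intro sum.cong)
    fix n assume "n \<in> {1..r + 1}"
    then obtain l where n: "n = Suc l"
      by (cases n) auto
    have "emb fps_X * (log_coeff n * emb fps_X ^ l * hpow h n (r + 1))
        = log_coeff n * (emb fps_X * emb fps_X ^ l * hpow h n (r + 1))"
      unfolding log_coeff_def by (simp only: mult.assoc emb_left_commute[of "emb fps_X"])
    then show "log_coeff n * (emb fps_X ^ n * hpow h n (Suc r)) = emb fps_X *
        (emb (fps_const ((-1) ^ (n + 1) / of_nat n)) * emb fps_X ^ (n - 1) * hpow h n (r + 1))"
      by (simp add: n log_coeff_def mult.assoc)
  qed simp
  finally show ?thesis ..
qed

end


section \<open>One series \<open>h\<close> acting on one series \<open>x\<close>\<close>

text \<open>The relations of the Yangian between the series \<open>h\<^sub>i\<^sub>,\<^sub>k\<close> and \<open>x\<^sup>\<plusminus>\<^sub>j\<^sub>,\<^sub>l\<close>, with \<open>c = \<plusminus>a\<^sub>i\<^sub>j / 2\<close>.\<close>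

locale hx_pair = fps_algebra emb for emb :: "complex fps \<Rightarrow> 'a::ring_1" +
  fixes h x :: "nat \<Rightarrow> 'a" and c :: complex
  assumes h_commute: "h k * h l = h l * h k"
    and commutator_h_0_x: "h 0 * x l - x l * h 0 = emb (fps_const (2 * c)) * x l"
    and commutator_h_Suc_x: "h (Suc k) * x l - x l * h (Suc k)
      = h k * x (Suc l) - x (Suc l) * h k + emb (fps_const c * fps_X) * (h k * x l + x l * h k)"
begin

text \<open>\<open>xpoly s P\<close> is \<open>P(T) x\<^sub>s\<close> for the shift \<open>T x\<^sub>l = x\<^sub>l\<^sub>+\<^sub>1\<close>.\<close>

definition xpoly :: "nat \<Rightarrow> complex fps poly \<Rightarrow> 'a" where
  "xpoly s P = (\<Sum>k\<le>degree P. emb (coeff P k) * x (s + k))"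

lemma xpoly_bound:
  assumes "degree P \<le> N"
  shows "xpoly s P = (\<Sum>k\<le>N. emb (coeff P k) * x (s + k))"
  unfolding xpoly_def using assms
  by (intro sum.mono_neutral_left) (auto simp: coeff_eq_0)

lemma xpoly_0 [simp]: "xpoly s 0 = 0"
  by (simp add: xpoly_def)

lemma xpoly_add: "xpoly s (P + Q) = xpoly s P + xpoly s Q"
proof -
  let ?N = "max (degree P) (degree Q)"
  have "degree (P + Q) \<le> ?N"
    by (rule degree_add_le) auto
  then show ?thesis
    by (simp add: xpoly_bound[of _ ?N] emb_add distrib_right sum.distrib)
qed

lemma xpoly_smult: "xpoly s (smult a P) = emb a * xpoly s P"
  by (simp add: xpoly_bound[of _ "degree P"] degree_smult_le emb_mult sum_distrib_left mult.assoc)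

lemma xpoly_uminus: "xpoly s (- P) = - xpoly s P"
  using xpoly_smult[of s "-1" P] by (simp add: emb_uminus)

lemma xpoly_diff: "xpoly s (P - Q) = xpoly s P - xpoly s Q"
  using xpoly_add[of s P "- Q"] by (simp add: xpoly_uminus)

lemma xpoly_sum: "xpoly s (sum f A) = (\<Sum>k\<in>A. xpoly s (f k))"
  by (induction A rule: infinite_finite_induct) (simp_all add: xpoly_add)

lemma xpoly_of_nat_mult: "xpoly s (of_nat k * P) = of_nat k * xpoly s P"
  by (simp add: of_nat_poly xpoly_smult emb_of_nat)

lemma xpoly_pCons: "xpoly s (pCons a P) = emb a * x s + xpoly (Suc s) P"
proof -
  have "xpoly s (pCons a P) = (\<Sum>k\<le>Suc (degree P). emb (coeff (pCons a P) k) * x (s + k))"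
    by (rule xpoly_bound) (simp add: degree_pCons_le)
  also have "\<dots> = emb a * x s + xpoly (Suc s) P"
    by (subst sum.atMost_Suc_shift) (simp add: xpoly_def)
  finally show ?thesis .
qed

lemma xpoly_1: "xpoly s 1 = x s"
  by (simp add: xpoly_def)

definition c_hbar :: "complex fps" where
  "c_hbar = fps_const c * fps_X"

definition alpha :: "complex fps poly" where
  "alpha = [:c_hbar, 1:]"

definition beta :: "complex fps poly" where
  "beta = [:- c_hbar, 1:]"

lemma xpoly_alpha_mult: "xpoly s (alpha * P) = xpoly (Suc s) P + emb c_hbar * xpoly s P"
proof -
  have "alpha * P = smult c_hbar P + pCons 0 P"
    by (simp add: alpha_def)
  then show ?thesis
    by (simp add: xpoly_add xpoly_smult xpoly_pCons add.commute)
qed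

lemma xpoly_beta_mult: "xpoly s (beta * P) = xpoly (Suc s) P - emb c_hbar * xpoly s P"
proof -
  have "beta * P = pCons 0 P - smult c_hbar P"
    by (simp add: beta_def)
  then show ?thesis
    by (simp add: xpoly_diff xpoly_smult xpoly_pCons)
qed

definition H :: "'a fps" where
  "H = 1 + hbar_series h"

lemma H_nth_0 [simp]: "H $ 0 = 1"
  and H_nth_Suc [simp]: "H $ Suc k = emb fps_X * h k"
  by (simp_all add: H_def)

text \<open>The relation \<open>[H\<^sub>k\<^sub>+\<^sub>1, x\<^sub>l] = H\<^sub>k (x\<^sub>l\<^sub>+\<^sub>1 + c\<hbar> x\<^sub>l) - (x\<^sub>l\<^sub>+\<^sub>1 - c\<hbar> x\<^sub>l) H\<^sub>k\<close>, in a form that is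
  linear in the pair \<open>(x\<^sub>l, x\<^sub>l\<^sub>+\<^sub>1)\<close>.\<close>

definition H_shift_rel :: "nat \<Rightarrow> 'a \<Rightarrow> 'a \<Rightarrow> bool" where
  "H_shift_rel k y y' \<longleftrightarrow>
     H $ Suc k * y - y * H $ Suc k = H $ k * (y' + emb c_hbar * y) - (y' - emb c_hbar * y) * H $ k"

lemma H_shift_rel_add: "H_shift_rel k y y' \<Longrightarrow> H_shift_rel k z z' \<Longrightarrow> H_shift_rel k (y + z) (y' + z')"
  unfolding H_shift_rel_def by (simp add: algebra_simps)

lemma H_shift_rel_emb_mult:
  assumes "H_shift_rel k y y'"
  shows "H_shift_rel k (emb a * y) (emb a * y')"
proof -
  have emb_a_mult: "emb a * (y' + emb c_hbar * y) = emb a * y' + emb c_hbar * (emb a * y)"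
    "emb a * (y' - emb c_hbar * y) = emb a * y' - emb c_hbar * (emb a * y)"
    by (simp_all only: distrib_left right_diff_distrib emb_left_commute[of "emb c_hbar" a])
  have "H $ Suc k * (emb a * y) - emb a * y * H $ Suc k = emb a * (H $ Suc k * y - y * H $ Suc k)"
    by (simp only: right_diff_distrib emb_left_commute[of "H $ Suc k"] mult.assoc)
  also have "\<dots> = emb a * (H $ k * (y' + emb c_hbar * y) - (y' - emb c_hbar * y) * H $ k)"
    using assms by (simp only: H_shift_rel_def)
  also have "\<dots> = H $ k * (emb a * (y' + emb c_hbar * y)) - emb a * (y' - emb c_hbar * y) * H $ k"
    by (simp only: right_diff_distrib left_diff_distrib emb_left_commute[of "H $ k", symmetric] mult.assoc)
  finally show ?thesis
    by (simp only: emb_a_mult H_shift_rel_def)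
qed

lemma emb_two_c_hbar: "emb fps_X * emb (fps_const (2 * c)) = emb c_hbar + emb c_hbar"
proof -
  have "fps_const (2 * c) = fps_const c + fps_const c"
    by simp
  then have "fps_X * fps_const (2 * c) = c_hbar + c_hbar"
    unfolding c_hbar_def by (metis distrib_left mult.commute)
  then show ?thesis
    by (metis emb_mult emb_add)
qed

lemma H_shift_rel_x: "H_shift_rel k (x l) (x (Suc l))"
proof (cases k)
  case 0
  have "H $ Suc 0 * x l - x l * H $ Suc 0 = emb fps_X * (h 0 * x l - x l * h 0)"
    by (simp add: emb_left_commute[of "x l"] algebra_simps)
  also have "\<dots> = (emb c_hbar + emb c_hbar) * x l"
    by (simp add: commutator_h_0_x emb_two_c_hbar flip: mult.assoc)
  finally show ?thesis
    using 0 by (simp add: H_shift_rel_def algebra_simps)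
next
  case (Suc k')
  have "H $ Suc k * x l - x l * H $ Suc k = emb fps_X * (h (Suc k') * x l - x l * h (Suc k'))"
    using Suc by (simp add: emb_left_commute[of "x l"] algebra_simps)
  also have "\<dots> = emb fps_X * (h k' * x (Suc l) - x (Suc l) * h k' + emb c_hbar * (h k' * x l + x l * h k'))"
    by (simp add: commutator_h_Suc_x c_hbar_def)
  also have "\<dots> = H $ k * (x (Suc l) + emb c_hbar * x l) - (x (Suc l) - emb c_hbar * x l) * H $ k"
    using Suc by (simp add: emb_left_commute[of "x _"] emb_left_commute[of "h k'"]
        emb_left_commute[of "emb c_hbar"] algebra_simps)
  finally show ?thesis
    by (simp add: H_shift_rel_def)
qed

lemma H_shift_rel_xpoly: "H_shift_rel k (xpoly s P) (xpoly (Suc s) P)"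
proof (induction P arbitrary: s)
  case (pCons a P)
  then show ?case
    by (simp add: xpoly_pCons H_shift_rel_add H_shift_rel_emb_mult H_shift_rel_x)
qed (simp add: H_shift_rel_def)

lemma commutator_H_xpoly:
  "H $ Suc k * xpoly s P - xpoly s P * H $ Suc k = H $ k * xpoly s (alpha * P) - xpoly s (beta * P) * H $ k"
  using H_shift_rel_xpoly[of k s P] by (simp add: H_shift_rel_def xpoly_alpha_mult xpoly_beta_mult)

abbreviation phi :: "nat \<Rightarrow> complex fps poly" where
  "phi \<equiv> ratio_coeff alpha beta"

lemma H_nth_mult_xpoly: "H $ n * xpoly s P = (\<Sum>k\<le>n. xpoly s (phi k * P) * H $ (n - k))"
proof (induction n arbitrary: P)
  case (Suc n)
  have phi_Suc: "xpoly s (phi (Suc k) * P) * H $ (n - k)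
      = xpoly s (phi k * (alpha * P)) * H $ (n - k) - (if k = 0 then xpoly s (beta * P) * H $ n else 0)" for k
    by (cases k) (simp_all add: ratio_coeff_Suc mult.assoc xpoly_diff left_diff_distrib)
  have "(\<Sum>k\<le>n. xpoly s (phi (Suc k) * P) * H $ (n - k))
      = (\<Sum>k\<le>n. xpoly s (phi k * (alpha * P)) * H $ (n - k)) - xpoly s (beta * P) * H $ n"
    by (simp add: phi_Suc sum_subtractf)
  also have "\<dots> = H $ n * xpoly s (alpha * P) - xpoly s (beta * P) * H $ n"
    by (simp only: Suc.IH)
  also have "\<dots> = H $ Suc n * xpoly s P - xpoly s P * H $ Suc n"
    by (simp only: commutator_H_xpoly)
  finally have "(\<Sum>k\<le>n. xpoly s (phi (Suc k) * P) * H $ (n - k)) = H $ Suc n * xpoly s P - xpoly s P * H $ Suc n" .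
  then show ?case
    by (simp only: sum.atMost_Suc_shift diff_Suc_Suc diff_zero ratio_coeff_0 mult_1_left) (simp add: algebra_simps)
qed simp

definition xpoly_series :: "nat \<Rightarrow> complex fps poly \<Rightarrow> 'a fps" where
  "xpoly_series s P = Abs_fps (\<lambda>k. xpoly s (phi k * P))"

text \<open>Conjugation by \<open>H(z)\<close> multiplies \<open>P\<close> by \<open>(1 - \<beta> z) / (1 - \<alpha> z)\<close>.\<close>

lemma H_mult_xpoly: "H * fps_const (xpoly s P) = xpoly_series s P * H"
proof (rule fps_ext)
  fix n
  have "(H * fps_const (xpoly s P)) $ n = (\<Sum>k\<le>n. xpoly s (phi k * P) * H $ (n - k))"
    by (simp add: H_nth_mult_xpoly)
  also have "\<dots> = (xpoly_series s P * H) $ n"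
    by (simp add: fps_mult_nth xpoly_series_def atLeast0AtMost)
  finally show "(H * fps_const (xpoly s P)) $ n = (xpoly_series s P * H) $ n" .
qed

lemma emb_h_commute: "emb u * h k * (emb v * h l) = emb v * h l * (emb u * h k)"
proof -
  have "emb u * h k * (emb v * h l) = emb (u * v) * (h k * h l)"
    by (simp add: emb_mult emb_left_commute[of "h k"] mult.assoc)
  also have "\<dots> = emb (v * u) * (h l * h k)"
    by (simp add: h_commute mult.commute)
  also have "\<dots> = emb v * h l * (emb u * h k)"
    by (simp add: emb_mult emb_left_commute[of "h l"] mult.assoc)
  finally show ?thesis .
qed

lemma hbar_series_commute_deriv:
  "hbar_series h * fps_deriv (hbar_series h) = fps_deriv (hbar_series h) * hbar_series h"
proof (rule fps_mult_commute_coeffwise)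
  fix a b
  have "of_nat (Suc b) * (emb fps_X * h b) = emb (of_nat (Suc b) * fps_X) * h b"
    by (simp only: emb_mult emb_of_nat mult.assoc)
  then show "hbar_series h $ a * fps_deriv (hbar_series h) $ b = fps_deriv (hbar_series h) $ b * hbar_series h $ a"
    by (cases a) (simp_all add: emb_h_commute)
qed

definition L :: "'a fps" where
  "L = fps_log (hbar_series h)"

lemma fps_deriv_L_nth: "fps_deriv L $ n = of_nat (Suc n) * (emb fps_X * tgen emb h n)"
  by (simp add: L_def hbar_tgen_eq_fps_log_nth)

lemma fps_deriv_L_mult_H: "fps_deriv L * H = fps_deriv H"
  unfolding L_def H_def
  using fps_deriv_log[OF hbar_series_nth_0 hbar_series_commute_deriv] by simp

text \<open>Differentiating \<open>H X\<^sub>0 = X H\<close> and using \<open>L' H = H'\<close> gives \<open>(L' X - X L' - X') H = 0\<close>;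
  then cancel the unit \<open>H\<close>.\<close>

lemma commutator_L_xpoly_series:
  "fps_deriv L * xpoly_series s P - xpoly_series s P * fps_deriv L = fps_deriv (xpoly_series s P)"
proof -
  define X where "X = xpoly_series s P"
  define X0 where "X0 = fps_const (xpoly s P)"
  have conj: "H * X0 = X * H"
    unfolding X_def X0_def by (rule H_mult_xpoly)
  have "fps_deriv H * X0 = X * fps_deriv H + fps_deriv X * H"
    using arg_cong[OF conj, of fps_deriv] by (simp add: X0_def)
  moreover have "fps_deriv L * X * H = fps_deriv H * X0"
    by (metis conj fps_deriv_L_mult_H mult.assoc)
  moreover have "X * fps_deriv H = X * fps_deriv L * H"
    by (metis fps_deriv_L_mult_H mult.assoc)
  ultimately have "(fps_deriv L * X - X * fps_deriv L - fps_deriv X) * H = 0"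
    by (simp add: algebra_simps)
  then have "fps_deriv L * X - X * fps_deriv L - fps_deriv X = 0"
    by (rule fps_mult_eq_0_cancel_right) simp
  then show ?thesis
    by (simp add: X_def)
qed

lemma commutator_L_xpoly_sum:
  "(\<Sum>a\<le>n. fps_deriv L $ a * xpoly s (phi (n - a) * P) - xpoly s (phi (n - a) * P) * fps_deriv L $ a)
    = of_nat (Suc n) * xpoly s (phi (Suc n) * P)"
proof -
  have left: "(fps_deriv L * xpoly_series s P) $ n = (\<Sum>a\<le>n. fps_deriv L $ a * xpoly s (phi (n - a) * P))"
    by (simp add: fps_mult_nth atLeast0AtMost xpoly_series_def)
  have "(xpoly_series s P * fps_deriv L) $ n = (\<Sum>i=0..n. xpoly s (phi i * P) * fps_deriv L $ (n - i))"
    by (simp add: fps_mult_nth xpoly_series_def)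
  also have "\<dots> = (\<Sum>i=0..n. xpoly s (phi (n + 0 - i) * P) * fps_deriv L $ (n - (n + 0 - i)))"
    by (rule sum.atLeastAtMost_rev)
  also have "\<dots> = (\<Sum>a\<le>n. xpoly s (phi (n - a) * P) * fps_deriv L $ a)"
    unfolding atLeast0AtMost by (intro sum.cong refl) auto
  finally have right: "(xpoly_series s P * fps_deriv L) $ n = \<dots>" .
  have deriv: "fps_deriv (xpoly_series s P) $ n = of_nat (Suc n) * xpoly s (phi (Suc n) * P)"
    by (simp add: xpoly_series_def)
  have "(fps_deriv L * xpoly_series s P) $ n - (xpoly_series s P * fps_deriv L) $ n
      = fps_deriv (xpoly_series s P) $ n"
    by (simp only: commutator_L_xpoly_series flip: fps_sub_nth)
  then show ?thesis
    by (simp only: left right deriv sum_subtractf)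
qed

text \<open>By the previous lemma the \<open>n\<close>-th commutator is determined by the earlier ones, and
  \<open>ratio_coeff_log_deriv\<close> says that the claimed values obey the same recursion.\<close>

lemma commutator_L_xpoly:
  "fps_deriv L $ n * xpoly s P - xpoly s P * fps_deriv L $ n = xpoly s ((alpha ^ Suc n - beta ^ Suc n) * P)"
proof (induction n arbitrary: P rule: less_induct)
  case (less n)
  let ?E = "\<lambda>a. alpha ^ Suc a - beta ^ Suc a"
  let ?C = "\<lambda>a. fps_deriv L $ a * xpoly s (phi (n - a) * P) - xpoly s (phi (n - a) * P) * fps_deriv L $ a"
  have "(\<Sum>a\<le>n. ?C a) = xpoly s ((\<Sum>a\<le>n. ?E a * phi (n - a)) * P)"
    by (simp only: commutator_L_xpoly_sum ratio_coeff_log_deriv xpoly_of_nat_mult mult.assoc)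
  also have "\<dots> = (\<Sum>a\<le>n. xpoly s (?E a * (phi (n - a) * P)))"
    by (simp only: sum_distrib_right xpoly_sum mult.assoc)
  finally have "(\<Sum>a<n. ?C a) + ?C n = (\<Sum>a<n. xpoly s (?E a * (phi (n - a) * P))) + xpoly s (?E n * P)"
    by (simp add: lessThan_Suc_atMost[symmetric])
  moreover have "(\<Sum>a<n. ?C a) = (\<Sum>a<n. xpoly s (?E a * (phi (n - a) * P)))"
    by (intro sum.cong refl less.IH) simp
  ultimately show ?case
    by simp
qed

lemma commutator_hbar_tgen_x:
  "emb fps_X * (emb (fps_const (1 / fact p)) * tgen emb h p) * x s
     - x s * (emb fps_X * (emb (fps_const (1 / fact p)) * tgen emb h p))
   = xpoly s (smult (fps_const (1 / fact (Suc p))) (alpha ^ Suc p - beta ^ Suc p))"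
proof -
  define T where "T = emb fps_X * (emb (fps_const (1 / fact p)) * tgen emb h p)"
  define F where "F = emb (fps_const (1 / fact (Suc p)))"
  have "fps_const (1 / fact (Suc p)) * of_nat (Suc p) = fps_const (1 / fact p :: complex)"
    by (simp add: fps_of_nat[symmetric] field_simps del: of_nat_Suc)
  then have scale: "F * of_nat (Suc p) = emb (fps_const (1 / fact p))"
    unfolding F_def by (metis emb_mult emb_of_nat)
  have "F * fps_deriv L $ p = (F * of_nat (Suc p)) * (emb fps_X * tgen emb h p)"
    by (simp only: fps_deriv_L_nth mult.assoc)
  also have "\<dots> = T"
    unfolding scale T_def by (rule emb_left_commute[symmetric])
  finally have T: "T = F * fps_deriv L $ p" ..
  have "T * x s - x s * T = F * (fps_deriv L $ p * x s - x s * fps_deriv L $ p)"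
    unfolding T F_def by (simp only: right_diff_distrib mult.assoc emb_left_commute[of "x s"])
  also have "\<dots> = F * xpoly s (alpha ^ Suc p - beta ^ Suc p)"
    using commutator_L_xpoly[of p s 1] by (simp only: xpoly_1 mult_1_right)
  finally show ?thesis
    by (simp only: T_def F_def xpoly_smult)
qed

lemma commutator_hbar_tgen_x_explicit:
  fixes \<sigma> a :: int
  assumes \<sigma>: "\<sigma> = 1 \<or> \<sigma> = -1" and c: "c = of_int \<sigma> * of_int a / 2"
  shows "emb fps_X * (emb (fps_const (1 / fact p)) * tgen emb h p) * x s
     - x s * (emb fps_X * (emb (fps_const (1 / fact p)) * tgen emb h p))
   = of_int \<sigma> * (\<Sum>k\<le>p. emb (qcoef a (p - k + 1) - qcoef (- a) (p - k + 1))
                           * (emb (fps_const (1 / fact k)) * x (s + k)))"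
proof -
  define Q where "Q = smult (fps_const (1 / fact (Suc p))) (alpha ^ Suc p - beta ^ Suc p)"
  have "degree Q \<le> p"
    unfolding Q_def alpha_def beta_def
    by (rule order_trans[OF degree_smult_le degree_linear_power_diff_le])
  then have "xpoly s Q = (\<Sum>k\<le>p. emb (coeff Q k) * x (s + k))"
    by (rule xpoly_bound)
  also have "\<dots> = (\<Sum>k\<le>p. emb (of_int \<sigma> * (qcoef a (p - k + 1) - qcoef (- a) (p - k + 1))
                                  * fps_const (1 / fact k)) * x (s + k))"
  proof (intro sum.cong refl)
    fix k assume "k \<in> {..p}"
    have "c_hbar = fps_const (of_int \<sigma> * of_int a / 2) * fps_X"
      unfolding c_hbar_def by (simp only: c)
    then show "emb (coeff Q k) * x (s + k) = emb (of_int \<sigma> * (qcoef a (p - k + 1) - qcoef (- a) (p - k + 1))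
        * fps_const (1 / fact k)) * x (s + k)"
      using coeff_linear_power_diff_qcoef[OF \<sigma>, of k p a] \<open>k \<in> {..p}\<close>
      by (simp add: Q_def alpha_def beta_def)
  qed
  also have "\<dots> = of_int \<sigma> * (\<Sum>k\<le>p. emb (qcoef a (p - k + 1) - qcoef (- a) (p - k + 1))
                                  * (emb (fps_const (1 / fact k)) * x (s + k)))"
    by (simp add: sum_distrib_left emb_mult emb_of_int mult.assoc)
  finally show ?thesis
    unfolding commutator_hbar_tgen_x Q_def .
qed

end

section \<open>The Yangian\<close>

lemma sbr_False: "sbr False q a b = a * b - b * a"
  by (simp add: sbr_def)

lemma hx_pair_yangian:
  assumes alg: "alg_structure emb" and rels: "yangian_rels m n emb h x"
    and i: "i \<in> {1..m+n+1}" and j: "j \<in> {1..m+n+1}"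
  shows "hx_pair emb (h i) (x e j) (of_int (sg e) * of_int (cartan m n i j) / 2)"
proof -
  interpret fps_algebra emb
    by (rule fps_algebra.intro[OF alg])
  define c where "c = (of_int (sg e) * of_int (cartan m n i j) / 2 :: complex)"
  note R = rels[unfolded yangian_rels_def Let_def sbr_False]
  have h_comm: "h i k * h i l = h i l * h i k" for k l
    using R[THEN conjunct1] i by blast
  have h_0: "h i' 0 * x e j' l - x e j' l * h i' 0 = of_int (sg e * cartan m n i' j') * x e j' l"
    if "i' \<in> {1..m+n+1}" "j' \<in> {1..m+n+1}" for i' j' l
    using R[THEN conjunct2, THEN conjunct1] that by blast
  have h_Suc_generic: "h i (Suc k) * x e j l - x e j l * h i (Suc k)
      = h i k * x e j (Suc l) - x e j (Suc l) * h i k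
        + of_int (sg e) * emb (fps_const (of_int (cartan m n i j) / 2)) * emb fps_X * (h i k * x e j l + x e j l * h i k)"
    if "(i, j) \<noteq> (m + 1, m + 1)" for k l
    using R[THEN conjunct2, THEN conjunct2, THEN conjunct2, THEN conjunct1] i j that by simp
  have h_Suc_odd: "h (m+1) (Suc k) * x e (m+1) l - x e (m+1) l * h (m+1) (Suc k) = 0" for k l
    using R[THEN conjunct2, THEN conjunct2, THEN conjunct2, THEN conjunct2, THEN conjunct1] by simp
  have "fps_const (2 * c) = of_int (sg e * cartan m n i j)"
    by (simp add: c_def flip: fps_of_int)
  then have two_c: "emb (fps_const (2 * c)) = of_int (sg e * cartan m n i j)"
    by (simp only: emb_of_int)
  have c_X: "emb (fps_const c * fps_X)
      = of_int (sg e) * emb (fps_const (of_int (cartan m n i j) / 2)) * emb fps_X"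
  proof -
    have "fps_const c = of_int (sg e) * fps_const (of_int (cartan m n i j) / 2)"
      by (simp add: c_def flip: fps_of_int)
    then show ?thesis
      by (simp add: emb_mult emb_of_int)
  qed
  have h_Suc: "h i (Suc k) * x e j l - x e j l * h i (Suc k)
      = h i k * x e j (Suc l) - x e j (Suc l) * h i k + emb (fps_const c * fps_X) * (h i k * x e j l + x e j l * h i k)"
    for k l
  proof (cases "(i, j) = (m + 1, m + 1)")
    case True
    then have "i = m + 1" "j = m + 1" "c = 0"
      by (simp_all add: c_def cartan_def)
    moreover have "h (m+1) k * x e (m+1) (Suc l) - x e (m+1) (Suc l) * h (m+1) k = 0"
      using h_0[of "m+1" "m+1" "Suc l"] h_Suc_odd[of _ "Suc l"] by (cases k) (simp_all add: cartan_def)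
    ultimately show ?thesis
      using h_Suc_odd by simp
  next
    case False
    then show ?thesis
      unfolding c_X by (rule h_Suc_generic)
  qed
  show ?thesis
    unfolding c_def[symmetric]
    by unfold_locales (simp_all only: alg h_comm h_0[OF i j] two_c h_Suc)
qed

theorem lemma4p2:
  fixes emb :: "complex fps \<Rightarrow> 'a::ring_1" and h :: "nat \<Rightarrow> nat \<Rightarrow> 'a"
    and x :: "bool \<Rightarrow> nat \<Rightarrow> nat \<Rightarrow> 'a" and m n i j s p :: nat and e :: bool
  assumes "alg_structure emb" and "yangian_rels m n emb h x"
    and "i \<in> {1..m+n+1}" and "j \<in> {1..m+n+1}"
  shows "sbr False (ypar m j) (emb fps_X * (emb (fps_const (1 / fact p)) * tgen emb (h i) p)) (x e j s)
    = of_int (sg e) * (\<Sum>k\<le>p. emb (qcoef (cartan m n i j) (p - k + 1) - qcoef (- cartan m n i j) (p - k + 1))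
                                * (emb (fps_const (1 / fact k)) * x e j (s + k)))"
proof -
  interpret hx_pair emb "h i" "x e j" "of_int (sg e) * of_int (cartan m n i j) / 2"
    using hx_pair_yangian[OF assms] .
  have "sg e = 1 \<or> sg e = -1"
    by (simp add: sg_def)
  then show ?thesis
    unfolding sbr_False by (rule commutator_hbar_tgen_x_explicit) simp
qed

end
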